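(* Let $\hat K_4$ denote $K_4$ with one edge deleted, and let $Q = K_1 + \hat K_4 + C_5 + C_5 + C_5 + C_5$ (Zykov sum of a single vertex, $\hat K_4$, and four disjoint $5$-cycles). Let $w$ be the vertex of $K_1$ and let $a,b$ be the two non-adjacent vertices of $\hat K_4$. Consider a coloring of the edges of $Q$ in three colors such that the set of edges joining $w$ to the vertices of $\hat K_4$ contains edges of all three colors, and the edges $wa$ and $wb$ have different colors. Then there is a monochromatic triangle in this coloring.
   Context: All graphs are finite, undirected, without loops or multiple edges. The Zykov sum $G_1+G_2$ of two vertex-disjoint graphs is obtained by joining every vertex of $G_1$ to every vertex of $G_2$. *)

theory Defs
  imports Main
begin

text \<open>QW is the vertex w of K1; QK i (i < 4) are the vertices of K4-hat, where
  QK 0 = a and QK 1 = b are the two non-adjacent ones; QC i j (i < 4, j < 5)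
  is vertex j of the i-th 5-cycle (j adjacent to j+1 mod 5).\<close>

datatype qv = QW | QK nat | QC nat nat

definition Q_verts :: "qv set" where
  "Q_verts = {QW} \<union> {QK i | i. i < 4} \<union> {QC i j | i j. i < 4 \<and> j < 5}"

fun part :: "qv \<Rightarrow> nat" where
  "part QW = 0"
| "part (QK i) = 1"
| "part (QC i j) = i + 2"

fun inner_adj :: "qv \<Rightarrow> qv \<Rightarrow> bool" where
  "inner_adj (QK i) (QK k) = (i \<noteq> k \<and> {i, k} \<noteq> {0, 1})"
| "inner_adj (QC i j) (QC i' j') = (i = i' \<and> ((j + 1) mod 5 = j' \<or> (j' + 1) mod 5 = j))"
| "inner_adj _ _ = False"

definition Q_adj :: "qv \<Rightarrow> qv \<Rightarrow> bool" where
  "Q_adj x y = (x \<in> Q_verts \<and> y \<in> Q_verts \<and>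
     (if part x = part y then inner_adj x y else True))"

definition edge_3col :: "(qv \<Rightarrow> qv \<Rightarrow> nat) \<Rightarrow> bool" where
  "edge_3col c = (\<forall>x y. Q_adj x y \<longrightarrow> c x y = c y x \<and> c x y < 3)"

definition mono_triangle :: "(qv \<Rightarrow> qv \<Rightarrow> nat) \<Rightarrow> bool" where
  "mono_triangle c = (\<exists>x y z. Q_adj x y \<and> Q_adj y z \<and> Q_adj x z \<and>
     c x y = c y z \<and> c x y = c x z)"

end

theory Submission
  imports Defs
begin

text \<open>Suppose no triangle is monochromatic. The neighbours x of w with c w x = i then
  span a graph whose edges avoid colour i, i.e. are 2-coloured; so it contains no K6
  (R(3,3) = 6) and no copy of Graham's graph K3 + C5. Inside it take the clique formed by
  the vertices of K4-hat of colour i (a clique because a and b get different colours) and a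
  largest i-coloured clique of every 5-cycle. It has at most 5 vertices, and at most 2
  apart from a 5-cycle all of whose spokes have colour i. Weighting a 5-cycle in colour i
  by its clique size, plus 1 if all its spokes have colour i, every colour carries weight
  at most 5 minus its number of K4-hat vertices, while every 5-cycle carries weight at
  least 3 over the three colours, since an odd cycle has no proper 2-colouring. Summing
  gives 4 + 4 * 3 \<le> 3 * 5, a contradiction.\<close>

definition arrows_triangle :: "(nat \<Rightarrow> nat \<Rightarrow> bool) \<Rightarrow> bool" where
  "arrows_triangle E \<longleftrightarrow> (\<forall>B :: nat \<Rightarrow> nat \<Rightarrow> bool.
     \<exists>a b d. E a b \<and> E b d \<and> E a d \<and> B a b = B b d \<and> B a b = B a d)"

lemma ex_less_Suc_iff: "(\<exists>x<Suc n. P x) \<longleftrightarrow> P n \<or> (\<exists>x<n. P x)"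
  by (metis less_Suc_eq)

text \<open>Once the bounded quantifiers are unfolded, the two arrowing facts below are
  propositional tautologies in the edge colours B p q.\<close>

lemma arrows_triangle_K6: "arrows_triangle (\<lambda>p q. p < q \<and> q < 6)"
proof -
  have "\<exists>d<6. \<exists>b<d. \<exists>a<b. B a b = B b d \<and> B a b = B a d" for B :: "nat \<Rightarrow> nat \<Rightarrow> bool"
    by (simp only: eval_nat_numeral BitM.simps ex_less_Suc_iff not_less0 simp_thms) sat
  then show ?thesis
    unfolding arrows_triangle_def by (metis less_trans)
qed

text \<open>Graham's graph K3 + C5 on 0, ..., 7: a triangle on 0, 1, 2 joined to the 5-cycle
  3, ..., 7; edges are listed from the smaller end.\<close>

definition graham_edge :: "nat \<Rightarrow> nat \<Rightarrow> bool" where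
  "graham_edge p q \<longleftrightarrow> p < q \<and> q < 8 \<and> (p < 3 \<or> q = Suc p \<or> (p = 3 \<and> q = 7))"

lemma arrows_triangle_graham: "arrows_triangle graham_edge"
proof -
  have "\<exists>d<8. \<exists>b<d. \<exists>a<b. graham_edge a b \<and> graham_edge b d \<and> graham_edge a d \<and>
      B a b = B b d \<and> B a b = B a d" for B :: "nat \<Rightarrow> nat \<Rightarrow> bool"
    unfolding graham_edge_def
    by (simp only: eval_nat_numeral BitM.simps ex_less_Suc_iff not_less0 simp_thms
        Suc_less_eq zero_less_Suc nat.inject nat.distinct) sat
  then show ?thesis
    unfolding arrows_triangle_def by blast
qed

lemma arrows_triangle_two_valued:
  assumes "arrows_triangle E" and "\<forall>p q. E p q \<longrightarrow> g p q = u \<or> g p q = v"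
  shows "\<exists>a b d. E a b \<and> E b d \<and> E a d \<and> g a b = g b d \<and> g a b = g a d"
proof -
  obtain a b d where E: "E a b" "E b d" "E a d"
    and eq: "(g a b = u) = (g b d = u)" "(g a b = u) = (g a d = u)"
    using spec[OF assms(1)[unfolded arrows_triangle_def], of "\<lambda>p q. g p q = u"]
    by (elim exE conjE)
  have "g a b = u \<or> g a b = v" "g b d = u \<or> g b d = v" "g a d = u \<or> g a d = v"
    using assms(2) E by simp_all
  with eq have "g a b = g b d" "g a b = g a d"
    by metis+
  with E show ?thesis
    by blast
qed

lemma less_3_cases: "(x::nat) < 3 \<longleftrightarrow> x = 0 \<or> x = 1 \<or> x = 2"
  by auto

lemma other_two_colours:
  assumes "(i::nat) < 3"
  obtains u v where "\<forall>x<3. x \<noteq> i \<longrightarrow> x = u \<or> x = v"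
  using assms that[of 1 2] that[of 0 2] that[of 0 1] unfolding less_3_cases by blast

lemma all_less_5: "(\<forall>t<5. P t) \<longleftrightarrow> P (0::nat) \<and> P 1 \<and> P 2 \<and> P 3 \<and> P 4"
  by (auto simp: less_Suc_eq numeral_eq_Suc)

lemma ex_less_5: "(\<exists>t<5. P t) \<longleftrightarrow> P (0::nat) \<or> P 1 \<or> P 2 \<or> P 3 \<or> P 4"
  by (auto simp: less_Suc_eq numeral_eq_Suc)

lemma two_colouring_C5_mono_edge:
  assumes "\<forall>t<5. k t = u \<or> k t = v"
  shows "\<exists>t<5. k (Suc t mod 5) = k t"
  using assms unfolding all_less_5 ex_less_5 by (auto simp: numeral_2_eq_2)

text \<open>A largest clique of the i-coloured vertices of a 5-cycle: an i-coloured edge if there is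
  one, otherwise a single i-coloured vertex.\<close>

definition cycle_clique :: "(nat \<Rightarrow> nat) \<Rightarrow> nat \<Rightarrow> nat set" where
  "cycle_clique k i =
     (case find (\<lambda>t. k t = i \<and> k (Suc t mod 5) = i) [0..<5] of
        Some t \<Rightarrow> {t, Suc t mod 5}
      | None \<Rightarrow> (case filter (\<lambda>t. k t = i) [0..<5] of [] \<Rightarrow> {} | t # _ \<Rightarrow> {t}))"

lemma cycle_clique_subset: "t \<in> cycle_clique k i \<Longrightarrow> t < 5 \<and> k t = i"
  by (auto simp: cycle_clique_def find_Some_iff split: option.splits list.splits
      dest!: arg_cong[where f = set])

lemma cycle_clique_adj:
  assumes "s \<in> cycle_clique k i" "t \<in> cycle_clique k i" "s \<noteq> t"
  shows "Suc s mod 5 = t \<or> Suc t mod 5 = s"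
  using assms by (auto simp: cycle_clique_def split: option.splits list.splits)

lemma card_cycle_clique_mono_edge:
  assumes "t < 5" "k t = i" "k (Suc t mod 5) = i"
  shows "card (cycle_clique k i) = 2"
proof -
  have "find (\<lambda>t. k t = i \<and> k (Suc t mod 5) = i) [0..<5] \<noteq> None"
    using assms by (auto simp: find_None_iff)
  then obtain s where s: "find (\<lambda>t. k t = i \<and> k (Suc t mod 5) = i) [0..<5] = Some s"
    by blast
  then have "Suc s mod 5 \<noteq> s"
    by (auto simp: find_Some_iff mod_Suc)
  with s show ?thesis
    by (simp add: cycle_clique_def)
qed

lemma card_cycle_clique_mono: "\<forall>t<5. k t = i \<Longrightarrow> card (cycle_clique k i) = 2"
  using card_cycle_clique_mono_edge[of 0 k i] by simp

lemma finite_cycle_clique: "finite (cycle_clique k i)"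
  by (auto simp: cycle_clique_def split: option.splits list.splits)

lemma card_cycle_clique_pos:
  assumes "t < 5" "k t = i"
  shows "1 \<le> card (cycle_clique k i)"
proof -
  have "filter (\<lambda>t. k t = i) [0..<5] \<noteq> []"
    using assms by (auto simp: filter_empty_conv)
  then have "cycle_clique k i \<noteq> {}"
    by (auto simp: cycle_clique_def split: option.splits list.splits)
  then show ?thesis
    using finite_cycle_clique by (simp add: Suc_le_eq card_gt_0_iff)
qed

definition cycle_weight :: "(nat \<Rightarrow> nat) \<Rightarrow> nat \<Rightarrow> nat" where
  "cycle_weight k i = card (cycle_clique k i) + of_bool (\<forall>t<5. k t = i)"

lemma cycle_weight_count:
  assumes "\<forall>t<5. k t < 3"
  shows "3 \<le> (\<Sum>i<3. cycle_weight k i)"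
proof -
  consider (mono) i where "i < 3" "\<forall>t<5. k t = i"
    | (all_colours) "\<forall>i<3. \<exists>t<5. k t = i"
    | (two_colours) i where "i < 3" "\<forall>t<5. k t \<noteq> i" "\<forall>i<3. \<not> (\<forall>t<5. k t = i)"
    by blast
  then show ?thesis
  proof cases
    case mono
    then have "cycle_weight k i = 3"
      using card_cycle_clique_mono by (simp add: cycle_weight_def)
    then show ?thesis
      using mono(1) member_le_sum[of i "{..<3}" "cycle_weight k"] by simp
  next
    case all_colours
    then have "\<forall>i\<in>{..<3}. 1 \<le> cycle_weight k i"
      using card_cycle_clique_pos by (fastforce simp: cycle_weight_def)
    then show ?thesis
      using sum_mono[of "{..<3}" "\<lambda>_. 1" "cycle_weight k"] by simp
  next
    case two_colours
    obtain u v where "\<forall>x<3. x \<noteq> i \<longrightarrow> x = u \<or> x = v"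
      using other_two_colours[OF two_colours(1)] .
    then have "\<forall>t<5. k t = u \<or> k t = v"
      using assms two_colours(2) by blast
    then obtain t where t: "t < 5" "k (Suc t mod 5) = k t"
      using two_colouring_C5_mono_edge by metis
    moreover obtain t' where t': "t' < 5" "k t' \<noteq> k t"
      using two_colours(3) assms t(1) by blast
    ultimately have "2 \<le> cycle_weight k (k t)" "1 \<le> cycle_weight k (k t')"
      using card_cycle_clique_mono_edge[of t k] card_cycle_clique_pos[of t' k]
      by (simp_all add: cycle_weight_def)
    moreover have "cycle_weight k (k t) + cycle_weight k (k t') \<le> (\<Sum>i<3. cycle_weight k i)"
      using sum_mono2[of "{..<3}" "{k t, k t'}" "cycle_weight k"] assms t t' by simp
    ultimately show ?thesis
      by linarith
  qed
qed

definition colour_nbhd :: "(qv \<Rightarrow> qv \<Rightarrow> nat) \<Rightarrow> nat \<Rightarrow> qv set" where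
  "colour_nbhd c i = {x. Q_adj QW x \<and> c QW x = i}"

definition Q_clique :: "qv set \<Rightarrow> bool" where
  "Q_clique S \<longleftrightarrow> (\<forall>x\<in>S. \<forall>y\<in>S. x \<noteq> y \<longrightarrow> Q_adj x y)"

lemma Q_clique_inj_image:
  assumes "Q_clique S" "h ` A \<subseteq> S" "inj_on h A" "p \<in> A" "q \<in> A" "p \<noteq> q"
  shows "Q_adj (h p) (h q)"
  using assms unfolding Q_clique_def inj_on_def by blast

lemma Q_adj_QW_iff: "Q_adj QW x \<longleftrightarrow> x \<in> Q_verts \<and> x \<noteq> QW"
  by (cases x) (auto simp: Q_adj_def Q_verts_def)

lemma colour_nbhd_edge_colour:
  assumes "edge_3col c" "\<not> mono_triangle c"
    and "x \<in> colour_nbhd c i" "y \<in> colour_nbhd c i" "Q_adj x y"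
  shows "c x y < 3 \<and> c x y \<noteq> i"
proof
  show "c x y < 3"
    using assms(1,5) unfolding edge_3col_def by blast
  show "c x y \<noteq> i"
  proof
    assume "c x y = i"
    with assms(3-5) have "Q_adj QW x \<and> Q_adj x y \<and> Q_adj QW y \<and> c QW x = c x y \<and> c QW x = c QW y"
      by (simp add: colour_nbhd_def)
    then have "mono_triangle c"
      unfolding mono_triangle_def by blast
    with assms(2) show False ..
  qed
qed

lemma mono_triangle_if_arrowing_embeds:
  assumes "edge_3col c" "arrows_triangle E" "i < 3"
    and "\<forall>p q. E p q \<longrightarrow> h p \<in> colour_nbhd c i \<and> h q \<in> colour_nbhd c i \<and> Q_adj (h p) (h q)"
  shows "mono_triangle c"
proof (rule ccontr)
  assume no_mono: "\<not> mono_triangle c"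
  obtain u v where uv: "\<forall>x<3. x \<noteq> i \<longrightarrow> x = u \<or> x = v"
    using other_two_colours[OF assms(3)] .
  have two_valued: "\<forall>p q. E p q \<longrightarrow> c (h p) (h q) = u \<or> c (h p) (h q) = v"
  proof (intro allI impI)
    fix p q
    assume "E p q"
    then have "c (h p) (h q) < 3 \<and> c (h p) (h q) \<noteq> i"
      using colour_nbhd_edge_colour[OF assms(1) no_mono] assms(4) by blast
    with uv show "c (h p) (h q) = u \<or> c (h p) (h q) = v"
      by blast
  qed
  obtain a b d where "E a b" "E b d" "E a d"
      "c (h a) (h b) = c (h b) (h d)" "c (h a) (h b) = c (h a) (h d)"
    using arrows_triangle_two_valued[OF assms(2) two_valued] by blast
  with assms(4) have "mono_triangle c"
    unfolding mono_triangle_def by blast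
  with no_mono show False ..
qed

lemma Q_clique_in_colour_nbhd_card_le_5:
  assumes "edge_3col c" "\<not> mono_triangle c" "i < 3"
    and "Q_clique S" "S \<subseteq> colour_nbhd c i"
  shows "card S \<le> 5"
proof (rule ccontr)
  assume "\<not> card S \<le> 5"
  then have "finite S" "card {..<6::nat} \<le> card S"
    by (auto intro: card_ge_0_finite)
  then obtain h :: "nat \<Rightarrow> qv" where h: "h ` {..<6} \<subseteq> S" "inj_on h {..<6}"
    using card_le_inj[of "{..<6::nat}" S] by auto
  have "\<forall>p q. p < q \<and> q < 6 \<longrightarrow>
      h p \<in> colour_nbhd c i \<and> h q \<in> colour_nbhd c i \<and> Q_adj (h p) (h q)"
    using h assms(5) Q_clique_inj_image[OF assms(4) h] by fastforce
  then show False
    using mono_triangle_if_arrowing_embeds[OF assms(1) arrows_triangle_K6 assms(3)] assms(2)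
    by blast
qed

lemma part_eq_cycle: "part x = j + 2 \<Longrightarrow> \<exists>t. x = QC j t"
  by (cases x) auto

lemma Q_clique_beside_mono_cycle_card_le_2:
  assumes "edge_3col c" "\<not> mono_triangle c" "i < 3"
    and "Q_clique S" "S \<subseteq> colour_nbhd c i"
    and "j < 4" "\<forall>t<5. c QW (QC j t) = i" "\<forall>t. QC j t \<notin> S"
  shows "card S \<le> 2"
proof (rule ccontr)
  assume "\<not> card S \<le> 2"
  then have "finite S" "card {..<3::nat} \<le> card S"
    by (auto intro: card_ge_0_finite)
  then obtain s :: "nat \<Rightarrow> qv" where s: "s ` {..<3} \<subseteq> S" "inj_on s {..<3}"
    using card_le_inj[of "{..<3::nat}" S] by auto
  define h where "h p = (if p < 3 then s p else QC j (p - 3))" for p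
  have cycle_nbhd: "QC j t \<in> colour_nbhd c i" if "t < 5" for t
    using assms(6,7) that by (auto simp: colour_nbhd_def Q_adj_QW_iff Q_verts_def)
  have nbhd: "h p \<in> colour_nbhd c i" if "p < 8" for p
    using s(1) assms(5) cycle_nbhd that by (auto simp: h_def)
  have adj: "Q_adj (h p) (h q)" if "graham_edge p q" for p q
  proof -
    have verts: "h p \<in> Q_verts" "h q \<in> Q_verts"
      using nbhd that by (auto simp: graham_edge_def colour_nbhd_def Q_adj_QW_iff)
    consider "q < 3" | "p < 3" "3 \<le> q" | "3 \<le> p"
      using that by (force simp: graham_edge_def)
    then show ?thesis
    proof cases
      case 1
      with that show ?thesis
        using Q_clique_inj_image[OF assms(4) s, of p q] by (simp add: graham_edge_def h_def)
    next
      case 2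
      then have "s p \<in> S"
        using s(1) by auto
      then have "part (s p) \<noteq> j + 2"
        using assms(8) part_eq_cycle by fastforce
      then show ?thesis
        using 2 verts by (simp add: h_def Q_adj_def)
    next
      case 3
      then show ?thesis
        using that verts by (auto simp: graham_edge_def h_def Q_adj_def)
    qed
  qed
  show False
    using mono_triangle_if_arrowing_embeds[OF assms(1) arrows_triangle_graham assms(3), of h]
      nbhd adj assms(2) by (auto simp: graham_edge_def)
qed

definition khat_class :: "(qv \<Rightarrow> qv \<Rightarrow> nat) \<Rightarrow> nat \<Rightarrow> nat set" where
  "khat_class c i = {t \<in> {..<4}. c QW (QK t) = i}"

abbreviation cycle_colours :: "(qv \<Rightarrow> qv \<Rightarrow> nat) \<Rightarrow> nat \<Rightarrow> nat \<Rightarrow> nat" where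
  "cycle_colours c j \<equiv> \<lambda>t. c QW (QC j t)"

definition colour_clique :: "(qv \<Rightarrow> qv \<Rightarrow> nat) \<Rightarrow> nat \<Rightarrow> nat set \<Rightarrow> qv set" where
  "colour_clique c i J =
     QK ` khat_class c i \<union> (\<Union>j\<in>J. QC j ` cycle_clique (cycle_colours c j) i)"

lemma colour_clique_subset:
  "J \<subseteq> {..<4} \<Longrightarrow> colour_clique c i J \<subseteq> colour_nbhd c i"
  by (auto simp: colour_clique_def khat_class_def colour_nbhd_def Q_adj_QW_iff Q_verts_def
      dest: cycle_clique_subset)

lemma Q_clique_colour_clique:
  assumes "c QW (QK 0) \<noteq> c QW (QK 1)" "J \<subseteq> {..<4}"
  shows "Q_clique (colour_clique c i J)"
  unfolding Q_clique_def
proof (intro ballI impI)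
  fix x y
  assume x: "x \<in> colour_clique c i J" and y: "y \<in> colour_clique c i J" and "x \<noteq> y"
  have "x \<in> Q_verts" "y \<in> Q_verts"
    using x y colour_clique_subset[OF assms(2)] by (auto simp: colour_nbhd_def Q_adj_QW_iff)
  with x y \<open>x \<noteq> y\<close> assms(1) show "Q_adj x y"
    by (auto simp: colour_clique_def khat_class_def Q_adj_def doubleton_eq_iff
        dest: cycle_clique_adj)
qed

lemma card_colour_clique:
  assumes "finite J"
  shows "card (colour_clique c i J) =
    card (khat_class c i) + (\<Sum>j\<in>J. card (cycle_clique (cycle_colours c j) i))"
proof -
  have "card (\<Union>j\<in>J. QC j ` cycle_clique (cycle_colours c j) i) =
      (\<Sum>j\<in>J. card (cycle_clique (cycle_colours c j) i))"
    using assms finite_cycle_clique by (subst card_UN_disjoint) (auto simp: card_image inj_on_def)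
  moreover have "card (QK ` khat_class c i) = card (khat_class c i)"
    by (simp add: card_image inj_on_def)
  ultimately show ?thesis
    unfolding colour_clique_def using assms finite_cycle_clique
    by (subst card_Un_disjoint) (auto simp: khat_class_def)
qed

lemma QC_notin_colour_clique: "j \<notin> J \<Longrightarrow> QC j t \<notin> colour_clique c i J"
  by (auto simp: colour_clique_def)

lemma colour_budget:
  fixes K :: nat and C :: "nat \<Rightarrow> nat" and F :: "nat \<Rightarrow> bool"
  assumes "finite J" "1 \<le> K" "K + (\<Sum>j\<in>J. C j) \<le> 5"
    and "\<And>j. j \<in> J \<Longrightarrow> F j \<Longrightarrow> C j = 2"
    and "\<And>j. j \<in> J \<Longrightarrow> F j \<Longrightarrow> K + (\<Sum>j'\<in>J - {j}. C j') \<le> 2"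
  shows "K + (\<Sum>j\<in>J. C j + of_bool (F j)) \<le> 5"
proof (cases "\<exists>j\<in>J. F j")
  case False
  then show ?thesis
    using assms(3) by (simp add: sum.distrib)
next
  case True
  then obtain j where j: "j \<in> J" "F j"
    by blast
  have "\<not> F j'" if "j' \<in> J - {j}" for j'
  proof
    assume "F j'"
    then have "2 \<le> (\<Sum>j'\<in>J - {j}. C j')"
      using assms(1,4) that member_le_sum[of j' "J - {j}" C] by auto
    then show False
      using assms(2,5) j by fastforce
  qed
  then have "(\<Sum>j'\<in>J - {j}. C j' + of_bool (F j')) = (\<Sum>j'\<in>J - {j}. C j')"
    by simp
  moreover have "(\<Sum>j\<in>J. C j + of_bool (F j)) = C j + 1 + (\<Sum>j'\<in>J - {j}. C j' + of_bool (F j'))"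
    using sum.remove[OF assms(1) j(1), of "\<lambda>j. C j + of_bool (F j)"] j(2) by simp
  ultimately show ?thesis
    using assms(4,5) j by fastforce
qed

lemma colour_class_budget:
  assumes "edge_3col c" "\<not> mono_triangle c" "c QW (QK 0) \<noteq> c QW (QK 1)"
    and "i < 3" "khat_class c i \<noteq> {}"
  shows "card (khat_class c i) + (\<Sum>j<4. cycle_weight (cycle_colours c j) i) \<le> 5"
  unfolding cycle_weight_def
proof (rule colour_budget)
  have clique: "Q_clique (colour_clique c i J)" "colour_clique c i J \<subseteq> colour_nbhd c i"
    if "J \<subseteq> {..<4}" for J
    using Q_clique_colour_clique[of c, OF assms(3) that] colour_clique_subset[OF that] .
  show "1 \<le> card (khat_class c i)"
    using assms(5) by (simp add: Suc_le_eq card_gt_0_iff khat_class_def)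
  show "card (khat_class c i) + (\<Sum>j<4. card (cycle_clique (cycle_colours c j) i)) \<le> 5"
    using Q_clique_in_colour_nbhd_card_le_5[OF assms(1,2,4) clique[OF order_refl]]
    by (simp add: card_colour_clique)
  show "card (cycle_clique (cycle_colours c j) i) = 2"
    if "\<forall>t<5. c QW (QC j t) = i" for j
    using card_cycle_clique_mono[OF that] .
  show "card (khat_class c i) + (\<Sum>j'\<in>{..<4} - {j}. card (cycle_clique (cycle_colours c j') i)) \<le> 2"
    if "j \<in> {..<4}" "\<forall>t<5. c QW (QC j t) = i" for j
    using Q_clique_beside_mono_cycle_card_le_2[OF assms(1,2,4) clique[OF Diff_subset]]
      QC_notin_colour_clique that by (simp add: card_colour_clique)
qed simp

lemma sum_card_khat_class:
  assumes "\<forall>t<4. c QW (QK t) < 3"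
  shows "(\<Sum>i<3. card (khat_class c i)) = 4"
proof -
  have "(\<Sum>i<3. card (khat_class c i)) = (\<Sum>i<3. \<Sum>t\<in>{t \<in> {..<4}. c QW (QK t) = i}. 1::nat)"
    by (simp add: khat_class_def)
  also have "\<dots> = (\<Sum>t<4::nat. 1)"
    using assms by (intro sum.group) auto
  finally show ?thesis
    by simp
qed

lemma double_counting_contradiction:
  fixes K :: "nat \<Rightarrow> nat" and W :: "nat \<Rightarrow> nat \<Rightarrow> nat"
  assumes "(\<Sum>i<3. K i) = 4" "\<forall>i<3. K i + (\<Sum>j<4. W j i) \<le> 5" "\<forall>j<4. 3 \<le> (\<Sum>i<3. W j i)"
  shows False
proof -
  have "(\<Sum>j<4::nat. 3::nat) \<le> (\<Sum>j<4. \<Sum>i<3. W j i)"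
    using assms(3) by (intro sum_mono) auto
  also have "\<dots> = (\<Sum>i<3. \<Sum>j<4. W j i)"
    by (rule sum.swap)
  finally have "12 \<le> (\<Sum>i<3. \<Sum>j<4. W j i)"
    by simp
  moreover have "(\<Sum>i<3. K i + (\<Sum>j<4. W j i)) \<le> (\<Sum>i<3::nat. 5::nat)"
    using assms(2) by (intro sum_mono) auto
  ultimately show False
    using assms(1) by (simp add: sum.distrib)
qed

theorem lemma3:
  fixes c :: "qv \<Rightarrow> qv \<Rightarrow> nat"
  assumes "edge_3col c"
    and "{c QW (QK i) | i. i < 4} = {0, 1, 2}"
    and "c QW (QK 0) \<noteq> c QW (QK 1)"
  shows "mono_triangle c"
proof (rule ccontr)
  assume no_mono: "\<not> mono_triangle c"
  have spoke_colour: "c QW x < 3" if "x \<in> Q_verts" "x \<noteq> QW" for x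
    using assms(1) that unfolding edge_3col_def by (metis Q_adj_QW_iff)
  have "khat_class c i \<noteq> {}" if "i < 3" for i
  proof -
    have "i \<in> {c QW (QK t) | t. t < 4}"
      using assms(2) that by (auto simp: less_3_cases)
    then show ?thesis
      by (auto simp: khat_class_def)
  qed
  then have "\<forall>i<3. card (khat_class c i) + (\<Sum>j<4. cycle_weight (cycle_colours c j) i) \<le> 5"
    using colour_class_budget[OF assms(1) no_mono assms(3)] by blast
  moreover have "\<forall>j<4. 3 \<le> (\<Sum>i<3. cycle_weight (cycle_colours c j) i)"
    using cycle_weight_count spoke_colour by (simp add: Q_verts_def)
  ultimately show False
    using sum_card_khat_class spoke_colour
      double_counting_contradiction[where K = "\<lambda>i. card (khat_class c i)"
        and W = "\<lambda>j. cycle_weight (cycle_colours c j)"]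
    by (simp add: Q_verts_def)
qed

end
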